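(* Let $N$ (pgf $\mathcal P_N$) and $X$ be given marginals, and consider CRMs in $\aleph^{FGM*}$ with these marginals. (i) If the associated Bernoulli sequence satisfies $I_j=I$ for all $j\ge0$ (a single Bernoulli$(1/2)$ variable $I$), the aggregate claim amount $S^{(\triangle,\triangle)}$ satisfies $\mathcal L_{S^{(\triangle,\triangle)}}(t)=\tfrac12\mathcal P_{N_{[1]}}(\mathcal L_{X_{[1]}}(t))+\tfrac12\mathcal P_{N_{[2]}}(\mathcal L_{X_{[2]}}(t))$, $t\ge0$. (ii) If $I_0=1-I$ and $I_j=I$ for $j\ge1$, the aggregate claim amount $S^{(\triangledown,\triangle)}$ satisfies $\mathcal L_{S^{(\triangledown,\triangle)}}(t)=\tfrac12\mathcal P_{N_{[1]}}(\mathcal L_{X_{[2]}}(t))+\tfrac12\mathcal P_{N_{[2]}}(\mathcal L_{X_{[1]}}(t))$, $t\ge0$. (iii) If $I_j=I$ for $j\ge1$ and $I_0$ is a Bernoulli$(1/2)$ variable independent of $I$, the aggregate claim amount $S^{(\perp,\triangle)}$ satisfies $\mathcal L_{S^{(\perp,\triangle)}}(t)=\tfrac12\mathcal P_N(\mathcal L_{X_{[1]}}(t))+\tfrac12\mathcal P_N(\mathcal L_{X_{[2]}}(t))$, $t\ge0$.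
   Context: Collective risk model (CRM): $N$ is a random variable with values in $\mathbb{N}_0$, cdf $F_N$, support $A_N$; $\underline X=\{X_j\}_{j\ge1}$ is a sequence of identically distributed strictly positive random variables with common cdf $F_X$ (generic copy $X$); $S=\sum_{j\ge1}X_j\mathbb{1}_{\{N\ge j\}}$. $\mathcal L_Y(t)=E[e^{-tY}]$ and $\mathcal P_N(z)=E[z^N]$. A $d$-variate FGM copula with parameters $\theta_{j_1\dots j_k}$ is $C(u_1,\dots,u_d)=\prod_{m=1}^d u_m\big(1+\sum_{k=2}^d\sum_{j_1<\dots<j_k}\theta_{j_1\dots j_k}\bar u_{j_1}\cdots\bar u_{j_k}\big)$, $\bar u=1-u$, with parameters such that $1+\sum_{k}\sum_{j_1<\dots<j_k}\theta_{j_1\dots j_k}\varepsilon_{j_1}\cdots\varepsilon_{j_k}\ge0$ for all $\varepsilon\in\{-1,1\}^d$. To it is associated the random vector $\boldsymbol I$ on $\{0,1\}^d$ with pmf $f_{\boldsymbol I}(\boldsymbol i)=2^{-d}\big(1+\sum_{k=2}^d\sum_{j_1<\dots<j_k}(-1)^{i_{j_1}+\dots+i_{j_k}}\theta_{j_1\dots j_k}\big)$; this is a bijection between $d$-variate FGM copulas and distributions on $\{0,1\}^d$ with Bernoulli$(1/2)$ margins. A CRM belongs to $\aleph^{FGM}$ if for every $k\in\mathbb{N}_1$, $k\le\sup A_N$, $F_{N,X_1,\dots,X_k}(n,x_1,\dots,x_k)=C_k(F_N(n),F_X(x_1),\dots,F_X(x_k))$ for a $(k+1)$-variate FGM copula $C_k$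 with coordinates indexed $0,\dots,k$ (index $0$ for $N$); the associated vectors $(I_0,\dots,I_k)$ form a consistent sequence $\{I_j\}_{j\ge0}$ (specifying this sequence determines the CRM). $\aleph^{FGM*}$: CRMs in $\aleph^{FGM}$ with $(N,X_1,\dots,X_k)\overset d=(N,X_{\pi(1)},\dots,X_{\pi(k)})$ for all $k$ and permutations $\pi$. For a random variable $Y$, $Y_{[1]}$, $Y_{[2]}$ denote the minimum and maximum of two iid copies of $Y$. *)

theory Defs
  imports "HOL-Probability.Probability"
begin

definition fgm_subsets :: "nat \<Rightarrow> nat set set" where
  "fgm_subsets d = {J. J \<subseteq> {..<d} \<and> 2 \<le> card J}"

definition fgm_copula :: "nat \<Rightarrow> (nat set \<Rightarrow> real) \<Rightarrow> (nat \<Rightarrow> real) \<Rightarrow> real" where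
  "fgm_copula d \<theta> u =
     (\<Prod>m<d. u m) * (1 + (\<Sum>J\<in>fgm_subsets d. \<theta> J * (\<Prod>j\<in>J. 1 - u j)))"

definition fgm_admissible :: "nat \<Rightarrow> (nat set \<Rightarrow> real) \<Rightarrow> bool" where
  "fgm_admissible d \<theta> \<longleftrightarrow>
     (\<forall>\<epsilon>::nat \<Rightarrow> real. (\<forall>m<d. \<epsilon> m = -1 \<or> \<epsilon> m = 1) \<longrightarrow>
        0 \<le> 1 + (\<Sum>J\<in>fgm_subsets d. \<theta> J * (\<Prod>j\<in>J. \<epsilon> j)))"

text \<open>pmf of the Bernoulli vector I on {0,1}^d associated with the FGM copula.\<close>
definition fgm_pmf :: "nat \<Rightarrow> (nat set \<Rightarrow> real) \<Rightarrow> (nat \<Rightarrow> nat) \<Rightarrow> real" where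
  "fgm_pmf d \<theta> i =
     (1 / 2 ^ d) * (1 + (\<Sum>J\<in>fgm_subsets d. (-1) ^ (\<Sum>j\<in>J. i j) * \<theta> J))"

definition cdf_N :: "'a measure \<Rightarrow> ('a \<Rightarrow> nat) \<Rightarrow> nat \<Rightarrow> real" where
  "cdf_N M N n = measure M {\<omega> \<in> space M. N \<omega> \<le> n}"

definition cdf_X :: "'a measure \<Rightarrow> (nat \<Rightarrow> 'a \<Rightarrow> real) \<Rightarrow> real \<Rightarrow> real" where
  "cdf_X M X x = measure M {\<omega> \<in> space M. X 1 \<omega> \<le> x}"

definition joint_cdf :: "'a measure \<Rightarrow> ('a \<Rightarrow> nat) \<Rightarrow> (nat \<Rightarrow> 'a \<Rightarrow> real) \<Rightarrow> nat
    \<Rightarrow> nat \<Rightarrow> (nat \<Rightarrow> real) \<Rightarrow> real" where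
  "joint_cdf M N X k n x =
     measure M {\<omega> \<in> space M. N \<omega> \<le> n \<and> (\<forall>j\<in>{1..k}. X j \<omega> \<le> x j)}"

definition support_N :: "'a measure \<Rightarrow> ('a \<Rightarrow> nat) \<Rightarrow> nat set" where
  "support_N M N = {n. 0 < measure M {\<omega> \<in> space M. N \<omega> = n}}"

definition CRM :: "'a measure \<Rightarrow> ('a \<Rightarrow> nat) \<Rightarrow> (nat \<Rightarrow> 'a \<Rightarrow> real) \<Rightarrow> bool" where
  "CRM M N X \<longleftrightarrow> prob_space M \<and> N \<in> measurable M (count_space UNIV) \<and>
     (\<forall>j\<ge>1. X j \<in> borel_measurable M) \<and>
     (\<forall>j\<ge>1. \<forall>\<omega>\<in>space M. 0 < X j \<omega>) \<and>
     (\<forall>j\<ge>1. distr M borel (X j) = distr M borel (X 1))"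

text \<open>Membership in aleph^FGM with associated Bernoulli sequence whose finite-dimensional
  laws are given by p: p k is the pmf of (I_0, ..., I_k) on {0,1}^(k+1).
  The condition "k \<le> sup A_N" is written as "k \<le> n for some n in A_N".\<close>
definition aleph_FGM ::
  "'a measure \<Rightarrow> ('a \<Rightarrow> nat) \<Rightarrow> (nat \<Rightarrow> 'a \<Rightarrow> real) \<Rightarrow> (nat \<Rightarrow> (nat \<Rightarrow> nat) \<Rightarrow> real) \<Rightarrow> bool" where
  "aleph_FGM M N X p \<longleftrightarrow> CRM M N X \<and>
     (\<forall>k\<ge>1. (\<exists>n\<in>support_N M N. k \<le> n) \<longrightarrow>
        (\<exists>\<theta>. fgm_admissible (k+1) \<theta> \<and>
           (\<forall>i. (\<forall>j\<le>k. i j \<in> {0,1}) \<longrightarrow> fgm_pmf (k+1) \<theta> i = p k i) \<and>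
           (\<forall>n x. joint_cdf M N X k n x =
               fgm_copula (k+1) \<theta> (\<lambda>m. if m = 0 then cdf_N M N n else cdf_X M X (x m)))))"

definition exchangeable_CRM :: "'a measure \<Rightarrow> ('a \<Rightarrow> nat) \<Rightarrow> (nat \<Rightarrow> 'a \<Rightarrow> real) \<Rightarrow> bool" where
  "exchangeable_CRM M N X \<longleftrightarrow>
     (\<forall>k\<ge>1. \<forall>\<pi>. \<pi> permutes {1..k} \<longrightarrow> (\<forall>n x.
        measure M {\<omega> \<in> space M. N \<omega> \<le> n \<and> (\<forall>j\<in>{1..k}. X (\<pi> j) \<omega> \<le> x j)}
        = joint_cdf M N X k n x))"

definition aleph_FGM_star where
  "aleph_FGM_star M N X p \<longleftrightarrow> aleph_FGM M N X p \<and> exchangeable_CRM M N X"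

text \<open>The three Bernoulli sequences: p k i = P((I_0..I_k) = (i 0..i k)), I ~ Bern(1/2).\<close>
definition p_tri_tri :: "nat \<Rightarrow> (nat \<Rightarrow> nat) \<Rightarrow> real" where
  "p_tri_tri k i = (if \<forall>j\<le>k. i j = i 0 then 1/2 else 0)"   \<comment> \<open>I_j = I for all j \<ge> 0\<close>

definition p_nabla_tri :: "nat \<Rightarrow> (nat \<Rightarrow> nat) \<Rightarrow> real" where
  "p_nabla_tri k i = (if \<forall>j\<in>{1..k}. i j = 1 - i 0 then 1/2 else 0)"  \<comment> \<open>I_0 = 1 - I, I_j = I\<close>

definition p_perp_tri :: "nat \<Rightarrow> (nat \<Rightarrow> nat) \<Rightarrow> real" where
  "p_perp_tri k i = (if \<forall>j\<in>{1..k}. i j = i 1 then 1/4 else 0)"  \<comment> \<open>I_0 indep. of I, I_j = I\<close>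

definition aggregate :: "('a \<Rightarrow> nat) \<Rightarrow> (nat \<Rightarrow> 'a \<Rightarrow> real) \<Rightarrow> 'a \<Rightarrow> real" where
  "aggregate N X \<omega> = (\<Sum>j\<in>{1..N \<omega>}. X j \<omega>)"

definition pgf :: "nat measure \<Rightarrow> real \<Rightarrow> real" where
  "pgf D z = (\<integral>n. z ^ n \<partial>D)"

definition laplace :: "real measure \<Rightarrow> real \<Rightarrow> real" where
  "laplace D t = (\<integral>y. exp (- t * y) \<partial>D)"

definition law_min2 :: "('b::linorder) measure \<Rightarrow> 'b measure" where
  "law_min2 D = distr (D \<Otimes>\<^sub>M D) D (\<lambda>(a, b). min a b)"

definition law_max2 :: "('b::linorder) measure \<Rightarrow> 'b measure" where
  "law_max2 D = distr (D \<Otimes>\<^sub>M D) D (\<lambda>(a, b). max a b)"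

end

(* Expanding the FGM copula in the cdfs h0(u) = 1 - (1 - u)^2 and h1(u) = u^2 of the minimum
   and the maximum of two iid uniforms writes it as the mixture, weighted by the law of the
   Bernoulli vector I, of products of h0 and h1. In all three cases I_1 = ... = I_k, so
   (N, X_1, ..., X_k) has the joint cdf of a mixture over (I_0, I) of N_[I_0+1] independent of iid
   copies of X_[I+1]. On {N = n}, writing exp (-t y) as the integral of the exponential density
   over [y, oo) and using Fubini turns this joint cdf, one coordinate at a time, into a product
   of Laplace transforms; summing over n gives E exp (-t S) as the mixture of the compound
   transforms P_{N_[a+1]} (L_{X_[b+1]} t). For (iii) the identity f (min x y) + f (max x y)
   = f x + f y averages the pgfs of N_[1] and N_[2] back to that of N. *)

theory Submission
  imports Defs
begin

section \<open>Minimum and maximum of two iid copies\<close>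

text \<open>The index a = 0 stands for the minimum and a = 1 for the maximum, matching the values of
  the Bernoulli variables of the FGM representation; order2_cdf a u is the cdf of the minimum or
  maximum of two iid copies whose common cdf takes the value u.\<close>
definition order2_cdf :: "nat \<Rightarrow> real \<Rightarrow> real" where
  "order2_cdf a u = (if a = 0 then 1 - (1 - u)\<^sup>2 else u\<^sup>2)"

definition order2_law :: "nat \<Rightarrow> 'b::linorder measure \<Rightarrow> 'b measure" where
  "order2_law a D = (if a = 0 then law_min2 D else law_max2 D)"

lemma order2_cdf_0 [simp]: "order2_cdf a 0 = 0"
  by (simp add: order2_cdf_def)

lemma order2_cdf_min_add_max: "order2_cdf 0 u + order2_cdf 1 u = 2 * u"
  by (simp add: order2_cdf_def power2_eq_square algebra_simps)

lemma sets_order2_law [simp]: "sets (order2_law a D) = sets D"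
  by (simp add: order2_law_def law_min2_def law_max2_def)

lemma
  fixes D :: "'b::{linorder_topology, second_countable_topology} measure"
  assumes "sets D = sets borel"
  shows measurable_min_pair: "(\<lambda>(x, y). min x y) \<in> measurable (D \<Otimes>\<^sub>M D) D"
    and measurable_max_pair: "(\<lambda>(x, y). max x y) \<in> measurable (D \<Otimes>\<^sub>M D) D"
proof -
  have [measurable]: "fst \<in> borel_measurable (D \<Otimes>\<^sub>M D)" "snd \<in> borel_measurable (D \<Otimes>\<^sub>M D)"
    using measurable_fst[of D D] measurable_snd[of D D] assms
    by (simp_all add: measurable_cong_sets[OF refl assms])
  show "(\<lambda>(x, y). min x y) \<in> measurable (D \<Otimes>\<^sub>M D) D"
    unfolding measurable_cong_sets[OF refl assms] case_prod_beta by measurable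
  show "(\<lambda>(x, y). max x y) \<in> measurable (D \<Otimes>\<^sub>M D) D"
    unfolding measurable_cong_sets[OF refl assms] case_prod_beta by measurable
qed

lemma prob_space_order2_law:
  fixes D :: "'b::{linorder_topology, second_countable_topology} measure"
  assumes "prob_space D" "sets D = sets borel"
  shows "prob_space (order2_law a D)"
proof -
  interpret pair_prob_space D D
    by (simp add: assms(1) pair_prob_space.intro pair_sigma_finite_def prob_space_imp_sigma_finite)
  show ?thesis
    using prob_space_distr[OF measurable_min_pair[OF assms(2)]] prob_space_distr[OF measurable_max_pair[OF assms(2)]]
    by (simp add: order2_law_def law_min2_def law_max2_def)
qed

text \<open>For a down-set A, the minimum lies in A iff one of the copies does, the maximum iff both do.\<close>
lemma measure_order2_law_downset:
  fixes D :: "'b::{linorder_topology, second_countable_topology} measure"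
  assumes "prob_space D" "sets D = sets borel" "A \<in> sets D"
    and down: "\<And>x y. x \<in> A \<Longrightarrow> y \<le> x \<Longrightarrow> y \<in> A"
  shows "measure (order2_law a D) A = order2_cdf a (measure D A)"
proof -
  interpret D: prob_space D by fact
  interpret pair_prob_space D D
    by (simp add: assms(1) pair_prob_space.intro pair_sigma_finite_def prob_space_imp_sigma_finite)
  have Ac: "space D - A \<in> sets D" using assms(3) by auto
  have square: "measure (D \<Otimes>\<^sub>M D) (B \<times> B) = (measure D B)\<^sup>2" if "B \<in> sets D" for B
    using D.emeasure_pair_measure_Times[OF that that] that
    by (simp add: D.emeasure_eq_measure emeasure_eq_measure ennreal_mult''[symmetric] power2_eq_square)
  show ?thesis
  proof (cases "a = 0")
    case True
    have "(\<lambda>(x, y). min x y) -` A \<inter> space (D \<Otimes>\<^sub>M D) = space (D \<Otimes>\<^sub>M D) - (space D - A) \<times> (space D - A)"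
      using down by (auto simp: space_pair_measure min_def split: if_splits)
    then have "measure (order2_law a D) A = 1 - (measure D (space D - A))\<^sup>2"
      using True assms(3) measurable_min_pair[OF assms(2)] Ac
      by (simp add: order2_law_def law_min2_def measure_distr prob_compl square)
    then show ?thesis
      using True assms(3) by (simp add: order2_cdf_def D.prob_compl)
  next
    case False
    have "(\<lambda>(x, y). max x y) -` A \<inter> space (D \<Otimes>\<^sub>M D) = A \<times> A"
      using down sets.sets_into_space[OF assms(3)]
      by (auto simp: space_pair_measure max_def split: if_splits)
    then show ?thesis
      using False assms(3) measurable_max_pair[OF assms(2)]
      by (simp add: order2_law_def law_max2_def measure_distr square order2_cdf_def)
  qed
qed

text \<open>The pair (min, max) is a rearrangement of the pair of copies.\<close>
lemma nn_integral_law_min2_add_law_max2: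
  fixes D :: "'b::{linorder_topology, second_countable_topology} measure" and f :: "'b \<Rightarrow> ennreal"
  assumes "prob_space D" "sets D = sets borel" and f[measurable]: "f \<in> borel_measurable D"
  shows "(\<integral>\<^sup>+ x. f x \<partial>law_min2 D) + (\<integral>\<^sup>+ x. f x \<partial>law_max2 D) = 2 * (\<integral>\<^sup>+ x. f x \<partial>D)"
proof -
  interpret D: prob_space D by fact
  interpret pair_prob_space D D
    by (simp add: assms(1) pair_prob_space.intro pair_sigma_finite_def prob_space_imp_sigma_finite)
  note [measurable] = measurable_min_pair[OF assms(2)] measurable_max_pair[OF assms(2)]
  have "(\<integral>\<^sup>+ x. f x \<partial>law_min2 D) + (\<integral>\<^sup>+ x. f x \<partial>law_max2 D)
      = (\<integral>\<^sup>+ p. f (case p of (x, y) \<Rightarrow> min x y) + f (case p of (x, y) \<Rightarrow> max x y) \<partial>(D \<Otimes>\<^sub>M D))"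
    by (simp add: law_min2_def law_max2_def nn_integral_distr nn_integral_add)
  also have "\<dots> = (\<integral>\<^sup>+ p. f (fst p) + f (snd p) \<partial>(D \<Otimes>\<^sub>M D))"
    by (intro nn_integral_cong) (auto simp: min_def max_def add.commute)
  also have "\<dots> = (\<integral>\<^sup>+ x. \<integral>\<^sup>+ y. f x \<partial>D \<partial>D) + (\<integral>\<^sup>+ y. \<integral>\<^sup>+ x. f y \<partial>D \<partial>D)"
    using D.nn_integral_fst[of "\<lambda>p. f (fst p)" D] nn_integral_snd[of "\<lambda>p. f (snd p)"]
    by (simp add: nn_integral_add)
  also have "\<dots> = 2 * (\<integral>\<^sup>+ x. f x \<partial>D)"
    by (simp add: D.emeasure_space_1 mult_2)
  finally show ?thesis .
qed

lemma measure_order2_law_singleton: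
  fixes D :: "nat measure"
  assumes "prob_space D" "sets D = sets borel"
  shows "measure (order2_law a D) {n} = order2_cdf a (measure D {..n}) - order2_cdf a (measure D {..<n})"
proof -
  interpret L: prob_space "order2_law a D" by (rule prob_space_order2_law[OF assms])
  have "{n} = {..n} - {..<n}" by auto
  moreover have "measure (order2_law a D) ({..n} - {..<n}) = measure (order2_law a D) {..n} - measure (order2_law a D) {..<n}"
    using assms(2) by (intro L.finite_measure_Diff) auto
  ultimately have "measure (order2_law a D) {n} = measure (order2_law a D) {..n} - measure (order2_law a D) {..<n}"
    by simp
  then show ?thesis
    using assms measure_order2_law_downset[OF assms, of "{..n}"] measure_order2_law_downset[OF assms, of "{..<n}"]
    by simp
qed

section \<open>FGM copulas as mixtures\<close>

lemma sum_bits_prod_eq_prod_sum: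
  fixes f :: "nat \<Rightarrow> nat \<Rightarrow> real"
  shows "(\<Sum>i\<in>{..<d} \<rightarrow>\<^sub>E {0, 1}. \<Prod>m<d. f m (i m)) = (\<Prod>m<d. f m 0 + f m 1)"
  using prod_sum_PiE[of "{..<d}" "\<lambda>_. {0::nat, 1}" f] by simp

text \<open>The expansion only uses that the two cdfs sum to 2u and differ by 2u(1 - u).\<close>
lemma fgm_copula_eq_mixture:
  "fgm_copula d \<theta> u = (\<Sum>i\<in>{..<d} \<rightarrow>\<^sub>E {0, 1}. fgm_pmf d \<theta> i * (\<Prod>m<d. order2_cdf (i m) (u m)))"
proof -
  let ?P = "\<lambda>i. \<Prod>m<d. order2_cdf (i m) (u m)"
  let ?I = "{..<d} \<rightarrow>\<^sub>E {0::nat, 1}"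
  have constant_term: "(\<Sum>i\<in>?I. ?P i) = 2 ^ d * (\<Prod>m<d. u m)"
    using order2_cdf_min_add_max by (subst sum_bits_prod_eq_prod_sum) (simp add: prod.distrib)
  have theta_term: "(\<Sum>i\<in>?I. (-1) ^ (\<Sum>j\<in>J. i j) * ?P i) = 2 ^ d * (\<Prod>m<d. u m) * (\<Prod>j\<in>J. 1 - u j)"
    if "J \<in> fgm_subsets d" for J
  proof -
    have J: "J \<subseteq> {..<d}" using that by (simp add: fgm_subsets_def)
    have restrict: "(\<Prod>j\<in>J. g j) = (\<Prod>m<d. if m \<in> J then g m else 1)" for g :: "nat \<Rightarrow> real"
      using J by (simp add: prod.If_cases Int_absorb1)
    have "(\<Sum>i\<in>?I. (-1) ^ (\<Sum>j\<in>J. i j) * ?P i)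
        = (\<Sum>i\<in>?I. \<Prod>m<d. (if m \<in> J then (-1) ^ i m else 1) * order2_cdf (i m) (u m))"
      by (intro sum.cong refl) (simp add: power_sum restrict[of "\<lambda>j. (-1) ^ _ j"] prod.distrib)
    also have "\<dots> = (\<Prod>m<d. 2 * u m * (if m \<in> J then 1 - u m else 1))"
      by (subst sum_bits_prod_eq_prod_sum)
        (auto intro!: prod.cong simp: order2_cdf_def power2_eq_square algebra_simps)
    finally show ?thesis
      by (simp add: prod.distrib restrict[of "\<lambda>j. 1 - u j"])
  qed
  have "(\<Sum>i\<in>?I. fgm_pmf d \<theta> i * ?P i)
      = (\<Sum>i\<in>?I. ?P i / 2 ^ d + (\<Sum>J\<in>fgm_subsets d. \<theta> J / 2 ^ d * ((-1) ^ (\<Sum>j\<in>J. i j) * ?P i)))"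
    by (auto intro!: sum.cong simp: fgm_pmf_def algebra_simps sum_distrib_left sum_distrib_right)
  also have "\<dots> = (\<Sum>i\<in>?I. ?P i) / 2 ^ d
      + (\<Sum>J\<in>fgm_subsets d. \<theta> J / 2 ^ d * (\<Sum>i\<in>?I. (-1) ^ (\<Sum>j\<in>J. i j) * ?P i))"
    by (simp add: sum.distrib sum_distrib_left sum_divide_distrib) (rule sum.swap)
  also have "\<dots> = fgm_copula d \<theta> u"
    using constant_term theta_term by (simp add: fgm_copula_def algebra_simps sum_distrib_left)
  finally show ?thesis by simp
qed

lemma PiE_constant_tail:
  fixes i :: "nat \<Rightarrow> 'a"
  assumes "i \<in> {..<k+1} \<rightarrow>\<^sub>E B" "\<forall>j\<in>{1..k}. i j = i 1"
  shows "i = (\<lambda>j\<in>{..<k+1}. if j = 0 then i 0 else i 1)"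
proof
  fix j
  consider "j = 0" | "j \<in> {1..k}" | "j \<notin> {..<k+1}" by force
  then show "i j = (\<lambda>j\<in>{..<k+1}. if j = 0 then i 0 else i 1) j"
  proof cases
    case 2
    then have "i j = i 1" using assms(2) by blast
    then show ?thesis using 2 by simp
  qed (simp_all add: PiE_arb[OF assms(1)])
qed

lemma fgm_mixture_constant_tail:
  fixes p :: "(nat \<Rightarrow> nat) \<Rightarrow> real" and w :: "nat \<Rightarrow> nat \<Rightarrow> real"
  assumes k: "k \<ge> 1"
    and p: "\<And>i. i \<in> {..<k+1} \<rightarrow>\<^sub>E {0, 1} \<Longrightarrow>
      p i = (if \<forall>j\<in>{1..k}. i j = i 1 then w (i 0) (i 1) else 0)"
  shows "(\<Sum>i\<in>{..<k+1} \<rightarrow>\<^sub>E {0, 1}. p i * (\<Prod>m<k+1. order2_cdf (i m) (u m)))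
       = (\<Sum>a\<in>{0, 1}. \<Sum>b\<in>{0, 1}. w a b * order2_cdf a (u 0) * (\<Prod>m\<in>{1..k}. order2_cdf b (u m)))"
proof -
  let ?I = "{..<k+1} \<rightarrow>\<^sub>E {0::nat, 1}" and ?A = "{0::nat, 1} \<times> {0::nat, 1}"
  let ?f = "\<lambda>i. p i * (\<Prod>m<k+1. order2_cdf (i m) (u m))"
  define c :: "nat \<times> nat \<Rightarrow> nat \<Rightarrow> nat" where "c = (\<lambda>(a, b). \<lambda>j\<in>{..<k+1}. if j = 0 then a else b)"
  have c_in: "c ` ?A \<subseteq> ?I"
    by (auto simp: c_def)
  have c_inj: "inj_on c ?A"
  proof (rule inj_onI, clarify)
    fix a b a' b' assume "c (a, b) = c (a', b')"
    then have "c (a, b) 0 = c (a', b') 0" "c (a, b) 1 = c (a', b') 1" by simp_all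
    then show "a = a' \<and> b = b'" using k by (simp add: c_def)
  qed
  have "i \<in> c ` ?A" if "i \<in> ?I" "\<forall>j\<in>{1..k}. i j = i 1" for i
  proof (rule image_eqI)
    have "c (i 0, i 1) = (\<lambda>j\<in>{..<k+1}. if j = 0 then i 0 else i 1)"
      by (simp only: c_def prod.case)
    then show "i = c (i 0, i 1)"
      by (rule trans[OF PiE_constant_tail[OF that] sym])
    show "(i 0, i 1) \<in> ?A"
      using PiE_mem[OF that(1), of 0] PiE_mem[OF that(1), of 1] k by auto
  qed
  then have "(\<Sum>i\<in>?I. ?f i) = (\<Sum>i\<in>c ` ?A. ?f i)"
    using p by (intro sum.mono_neutral_right[OF _ c_in]) (auto simp: finite_PiE)
  also have "\<dots> = (\<Sum>x\<in>?A. ?f (c x))"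
    by (rule sum.reindex[OF c_inj, unfolded comp_def])
  also have "\<dots> = (\<Sum>(a, b)\<in>?A. w a b * order2_cdf a (u 0) * (\<Prod>m\<in>{1..k}. order2_cdf b (u m)))"
  proof (intro sum.cong refl, clarify)
    fix a b :: nat assume ab: "a \<in> {0, 1}" "b \<in> {0, 1}"
    have "p (c (a, b)) = w a b"
      using p[of "c (a, b)"] c_in ab k by (auto simp: c_def)
    moreover have "{..<k+1} = insert 0 {1..k}" by auto
    ultimately show "?f (c (a, b)) = w a b * order2_cdf a (u 0) * (\<Prod>m\<in>{1..k}. order2_cdf b (u m))"
      by (simp add: c_def)
  qed
  finally show ?thesis
    by (simp add: sum.cartesian_product)
qed

section \<open>Laplace transforms from cdfs\<close>

lemma nn_integral_exp_density_atLeast: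
  fixes t y :: real
  assumes "0 < t"
  shows "(\<integral>\<^sup>+ s. ennreal (t * exp (- t * s)) * indicator {y..} s \<partial>lborel) = ennreal (exp (- t * y))"
proof -
  have "((\<lambda>s. - exp (- t * s)) \<longlongrightarrow> - 0) at_top"
    using assms
    by (intro tendsto_minus filterlim_compose[OF exp_at_bot]
        filterlim_tendsto_neg_mult_at_bot[OF tendsto_const] filterlim_ident) auto
  then have "(\<integral>\<^sup>+ s. ennreal (t * exp (- t * s)) * indicator {y..} s \<partial>lborel) = ennreal (0 - (- exp (- t * y)))"
    using assms by (intro nn_integral_FTC_atLeast) (auto intro!: derivative_eq_intros)
  then show ?thesis by simp
qed

text \<open>Fubini, after writing exp (-t y) as the integral of the exponential density over
  [y, \<infinity>).\<close>
lemma nn_integral_mult_exp_eq_cdf_transform: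
  fixes Z :: "'a \<Rightarrow> ennreal" and Y :: "'a \<Rightarrow> real"
  assumes "sigma_finite_measure M" "Y \<in> borel_measurable M" "Z \<in> borel_measurable M" "0 < t"
  shows "(\<integral>\<^sup>+ \<omega>. Z \<omega> * ennreal (exp (- t * Y \<omega>)) \<partial>M)
       = (\<integral>\<^sup>+ s. ennreal (t * exp (- t * s)) * (\<integral>\<^sup>+ \<omega>. Z \<omega> * indicator {..s} (Y \<omega>) \<partial>M) \<partial>lborel)"
proof -
  interpret M: sigma_finite_measure M by fact
  interpret pair_sigma_finite M lborel by unfold_locales
  let ?f = "\<lambda>\<omega> s. Z \<omega> * (ennreal (t * exp (- t * s)) * indicator {Y \<omega>..} s)"
  have f: "case_prod ?f \<in> borel_measurable (M \<Otimes>\<^sub>M lborel)"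
    using assms(2,3) by (simp add: indicator_def) measurable
  have "(\<integral>\<^sup>+ \<omega>. Z \<omega> * ennreal (exp (- t * Y \<omega>)) \<partial>M) = (\<integral>\<^sup>+ \<omega>. \<integral>\<^sup>+ s. ?f \<omega> s \<partial>lborel \<partial>M)"
    using nn_integral_exp_density_atLeast[OF assms(4)] by (simp add: nn_integral_cmult)
  also have "\<dots> = (\<integral>\<^sup>+ s. \<integral>\<^sup>+ \<omega>. ?f \<omega> s \<partial>M \<partial>lborel)"
    by (rule Fubini'[OF f, symmetric])
  also have "\<dots> = (\<integral>\<^sup>+ s. ennreal (t * exp (- t * s)) * (\<integral>\<^sup>+ \<omega>. Z \<omega> * indicator {..s} (Y \<omega>) \<partial>M) \<partial>lborel)"
    using assms(2,3)
    by (intro nn_integral_cong) (simp add: nn_integral_cmult[symmetric] indicator_def mult_ac)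
  finally show ?thesis .
qed

lemma nn_integral_exp_eq_cdf_transform:
  fixes L :: "real measure"
  assumes "prob_space L" "sets L = sets borel" "0 < t"
  shows "(\<integral>\<^sup>+ y. ennreal (exp (- t * y)) \<partial>L)
       = (\<integral>\<^sup>+ s. ennreal (t * exp (- t * s)) * emeasure L {..s} \<partial>lborel)"
proof -
  interpret prob_space L by fact
  have id: "(\<lambda>y. y) \<in> borel_measurable L"
    unfolding measurable_cong_sets[OF assms(2) refl] by simp
  have "{..s} \<in> sets L" for s
    unfolding assms(2) by simp
  then have "(\<integral>\<^sup>+ y. 1 * indicator {..s} y \<partial>L) = emeasure L {..s}" for s
    by simp
  then show ?thesis
    using nn_integral_mult_exp_eq_cdf_transform[OF sigma_finite_measure_axioms id _ assms(3), of "\<lambda>_. 1"]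
    by simp
qed

lemma borel_measurable_emeasure_atMost:
  fixes L :: "real measure"
  assumes "finite_measure L" "sets L = sets borel"
  shows "(\<lambda>s. emeasure L {..s}) \<in> borel_measurable borel"
proof -
  interpret finite_measure L by fact
  have "{..s} \<in> sets L" for s
    unfolding assms(2) by simp
  then have "mono (\<lambda>s. measure L {..s})"
    by (intro monoI finite_measure_mono) auto
  then have "(\<lambda>s. ennreal (measure L {..s})) \<in> borel_measurable borel"
    using borel_measurable_mono by measurable
  then show ?thesis
    by (simp add: emeasure_eq_measure)
qed

lemma nn_integral_mult_exp_from_cdf:
  fixes Z :: "'a \<Rightarrow> ennreal" and Y :: "'a \<Rightarrow> real" and c :: "'b \<Rightarrow> ennreal"
    and L :: "'b \<Rightarrow> real measure"
  assumes M: "sigma_finite_measure M" "Y \<in> borel_measurable M" "Z \<in> borel_measurable M"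
    and t: "0 < t" and B: "finite B"
    and L: "\<And>b. b \<in> B \<Longrightarrow> prob_space (L b)" "\<And>b. b \<in> B \<Longrightarrow> sets (L b) = sets borel"
    and cdf: "\<And>s. (\<integral>\<^sup>+ \<omega>. Z \<omega> * indicator {..s} (Y \<omega>) \<partial>M) = (\<Sum>b\<in>B. c b * emeasure (L b) {..s})"
  shows "(\<integral>\<^sup>+ \<omega>. Z \<omega> * ennreal (exp (- t * Y \<omega>)) \<partial>M)
       = (\<Sum>b\<in>B. c b * (\<integral>\<^sup>+ y. ennreal (exp (- t * y)) \<partial>L b))"
proof -
  let ?g = "\<lambda>s. ennreal (t * exp (- t * s))"
  have [measurable]: "(\<lambda>s. emeasure (L b) {..s}) \<in> borel_measurable borel" if "b \<in> B" for b
    using L[OF that] by (intro borel_measurable_emeasure_atMost prob_space.axioms(1))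
  have "(\<integral>\<^sup>+ \<omega>. Z \<omega> * ennreal (exp (- t * Y \<omega>)) \<partial>M)
      = (\<integral>\<^sup>+ s. (\<Sum>b\<in>B. c b * (?g s * emeasure (L b) {..s})) \<partial>lborel)"
    unfolding nn_integral_mult_exp_eq_cdf_transform[OF M t] cdf
    by (simp add: sum_distrib_left mult.left_commute)
  also have "\<dots> = (\<Sum>b\<in>B. c b * (\<integral>\<^sup>+ s. ?g s * emeasure (L b) {..s} \<partial>lborel))"
    using B by (simp add: nn_integral_sum nn_integral_cmult)
  also have "\<dots> = (\<Sum>b\<in>B. c b * (\<integral>\<^sup>+ y. ennreal (exp (- t * y)) \<partial>L b))"
    using nn_integral_exp_eq_cdf_transform[OF L t] by simp
  finally show ?thesis .
qed

lemma prod_atLeastAtMost_Suc_fun_upd: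
  fixes g :: "nat \<Rightarrow> 'b \<Rightarrow> 'c::comm_monoid_mult"
  shows "(\<Prod>j\<in>{1..Suc k}. g j ((x(Suc k := s)) j)) = (\<Prod>j\<in>{1..k}. g j (x j)) * g (Suc k) s"
proof -
  have "(\<Prod>j\<in>{1..k}. g j ((x(Suc k := s)) j)) = (\<Prod>j\<in>{1..k}. g j (x j))"
    by (intro prod.cong) auto
  then show ?thesis
    by (simp add: prod.cl_ivl_Suc)
qed

lemma nn_integral_prod_exp_from_joint_cdf:
  fixes Z :: "'a \<Rightarrow> ennreal" and Y :: "nat \<Rightarrow> 'a \<Rightarrow> real" and c :: "'b \<Rightarrow> ennreal"
    and L :: "'b \<Rightarrow> real measure"
  assumes M: "sigma_finite_measure M" "Z \<in> borel_measurable M"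
    and Y: "\<And>j. j \<in> {1..k} \<Longrightarrow> Y j \<in> borel_measurable M" and t: "0 < t" and B: "finite B"
    and L: "\<And>b. b \<in> B \<Longrightarrow> prob_space (L b)" "\<And>b. b \<in> B \<Longrightarrow> sets (L b) = sets borel"
    and cdf: "\<And>x. (\<integral>\<^sup>+ \<omega>. Z \<omega> * (\<Prod>j\<in>{1..k}. indicator {..x j} (Y j \<omega>)) \<partial>M)
      = (\<Sum>b\<in>B. c b * (\<Prod>j\<in>{1..k}. emeasure (L b) {..x j}))"
  shows "(\<integral>\<^sup>+ \<omega>. Z \<omega> * (\<Prod>j\<in>{1..k}. ennreal (exp (- t * Y j \<omega>))) \<partial>M)
       = (\<Sum>b\<in>B. c b * (\<integral>\<^sup>+ y. ennreal (exp (- t * y)) \<partial>L b) ^ k)"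
  using M(2) Y cdf
proof (induction k arbitrary: Z c)
  case 0
  then show ?case by simp
next
  case (Suc k)
  let ?LT = "\<lambda>b. \<integral>\<^sup>+ y. ennreal (exp (- t * y)) \<partial>L b"
  define Z' where "Z' \<omega> = Z \<omega> * ennreal (exp (- t * Y (Suc k) \<omega>))" for \<omega>
  have Y_Suc: "Y (Suc k) \<in> borel_measurable M" and Y_le: "\<And>j. j \<in> {1..k} \<Longrightarrow> Y j \<in> borel_measurable M"
    using Suc.prems(2) by auto
  have Z': "Z' \<in> borel_measurable M"
    unfolding Z'_def using Suc.prems(1) Y_Suc by measurable
  have "(\<integral>\<^sup>+ \<omega>. Z' \<omega> * (\<Prod>j\<in>{1..k}. indicator {..x j} (Y j \<omega>)) \<partial>M)
      = (\<Sum>b\<in>B. c b * ?LT b * (\<Prod>j\<in>{1..k}. emeasure (L b) {..x j}))" for x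
  proof -
    have "(\<integral>\<^sup>+ \<omega>. (Z \<omega> * (\<Prod>j\<in>{1..k}. indicator {..x j} (Y j \<omega>))) * ennreal (exp (- t * Y (Suc k) \<omega>)) \<partial>M)
        = (\<Sum>b\<in>B. (c b * (\<Prod>j\<in>{1..k}. emeasure (L b) {..x j})) * ?LT b)"
    proof (rule nn_integral_mult_exp_from_cdf[OF M(1) Y_Suc _ t B L])
      have "(\<lambda>\<omega>. \<Prod>j\<in>{1..k}. indicator {..x j} (Y j \<omega>) :: ennreal) \<in> borel_measurable M"
        using Y_le by (intro borel_measurable_prod_ennreal) measurable
      then show "(\<lambda>\<omega>. Z \<omega> * (\<Prod>j\<in>{1..k}. indicator {..x j} (Y j \<omega>))) \<in> borel_measurable M"
        using Suc.prems(1) by measurable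
      show "(\<integral>\<^sup>+ \<omega>. Z \<omega> * (\<Prod>j\<in>{1..k}. indicator {..x j} (Y j \<omega>)) * indicator {..s} (Y (Suc k) \<omega>) \<partial>M)
          = (\<Sum>b\<in>B. c b * (\<Prod>j\<in>{1..k}. emeasure (L b) {..x j}) * emeasure (L b) {..s})" for s
        using Suc.prems(3)[of "x(Suc k := s)"] by (simp add: prod_atLeastAtMost_Suc_fun_upd mult.assoc)
    qed
    then show ?thesis
      by (simp add: Z'_def mult_ac)
  qed
  from Suc.IH[OF Z' Y_le this]
  show ?case
    by (simp add: Z'_def prod.cl_ivl_Suc mult_ac)
qed

section \<open>Generating functions and Laplace transforms\<close>

lemma ennreal_pgf:
  fixes D :: "nat measure"
  assumes "prob_space D" "sets D = sets (count_space UNIV)" "0 \<le> z" "z \<le> 1"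
  shows "ennreal (pgf D z) = (\<integral>\<^sup>+ n. ennreal (z ^ n) \<partial>D)"
proof -
  interpret prob_space D by fact
  have "integrable D (\<lambda>n. z ^ n)"
    using assms(3,4)
    by (intro integrable_const_bound[where B=1]) (auto simp: power_le_one measurable_cong_sets[OF assms(2) refl])
  then show ?thesis
    unfolding pgf_def using assms(3) by (intro nn_integral_eq_integral[symmetric]) auto
qed

lemma ennreal_pgf_eq_suminf:
  fixes D :: "nat measure"
  assumes "prob_space D" "sets D = sets (count_space UNIV)" "0 \<le> z" "z \<le> 1"
  shows "ennreal (pgf D z) = (\<Sum>n. ennreal z ^ n * emeasure D {n})"
proof -
  have "ennreal (pgf D z) = (\<integral>\<^sup>+ m. (\<Sum>n. ennreal z ^ n * indicator {n} m) \<partial>D)"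
    unfolding ennreal_pgf[OF assms]
  proof (intro nn_integral_cong)
    fix m
    have "(\<Sum>n. ennreal z ^ n * indicator {n} m) = (\<Sum>n\<in>{m}. ennreal z ^ n * indicator {n} m)"
      by (intro suminf_finite) auto
    then show "ennreal (z ^ m) = (\<Sum>n. ennreal z ^ n * indicator {n} m)"
      using assms(3) by (simp add: ennreal_power)
  qed
  also have "\<dots> = (\<Sum>n. \<integral>\<^sup>+ m. ennreal z ^ n * indicator {n} m \<partial>D)"
    by (intro nn_integral_suminf) (simp add: measurable_cong_sets[OF assms(2) refl])
  also have "\<dots> = (\<Sum>n. ennreal z ^ n * emeasure D {n})"
    using assms(2) by (simp add: nn_integral_cmult_indicator)
  finally show ?thesis .
qed

lemma pgf_1: "prob_space D \<Longrightarrow> pgf D 1 = 1"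
  by (simp add: pgf_def prob_space.prob_space)

lemma laplace_0: "prob_space L \<Longrightarrow> laplace L 0 = 1"
  by (simp add: laplace_def prob_space.prob_space)

lemma pgf_eq_mean_pgf_min_max:
  fixes D :: "nat measure"
  assumes "prob_space D" "sets D = sets (count_space UNIV)" "0 \<le> z" "z \<le> 1"
  shows "pgf D z = 1/2 * pgf (law_min2 D) z + 1/2 * pgf (law_max2 D) z"
proof -
  have D: "prob_space D" "sets D = sets borel"
    using assms(1,2) by (simp_all add: sets_borel_eq_count_space)
  have laws: "prob_space (order2_law a D)" "sets (order2_law a D) = sets (count_space UNIV)" for a
    using prob_space_order2_law[OF D] assms(2) by simp_all
  have "ennreal (pgf (law_min2 D) z + pgf (law_max2 D) z) = ennreal (2 * pgf D z)"
    using ennreal_pgf[OF laws(1,2)[of 0] assms(3,4)] ennreal_pgf[OF laws(1,2)[of 1] assms(3,4)]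
      nn_integral_law_min2_add_law_max2[OF D, of "\<lambda>n. ennreal (z ^ n)"] ennreal_pgf[OF assms]
    by (simp add: order2_law_def pgf_def assms(3) ennreal_mult' measurable_cong_sets[OF assms(2) refl])
  then show ?thesis
    using assms(3) by (subst (asm) ennreal_inj) (auto simp: pgf_def)
qed

lemma
  fixes L :: "real measure"
  assumes "prob_space L" "sets L = sets borel" "AE y in L. 0 \<le> y" "0 \<le> t"
  shows ennreal_laplace: "ennreal (laplace L t) = (\<integral>\<^sup>+ y. ennreal (exp (- t * y)) \<partial>L)"
    and laplace_nonneg: "0 \<le> laplace L t"
    and laplace_le_1: "laplace L t \<le> 1"
proof -
  interpret prob_space L by fact
  have bound: "AE y in L. norm (exp (- t * y)) \<le> 1"
    using assms(3) by eventually_elim (use assms(4) in simp)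
  have int: "integrable L (\<lambda>y. exp (- t * y))"
    by (intro integrable_const_bound[OF bound]) (simp add: measurable_cong_sets[OF assms(2) refl])
  show "ennreal (laplace L t) = (\<integral>\<^sup>+ y. ennreal (exp (- t * y)) \<partial>L)"
    unfolding laplace_def by (intro nn_integral_eq_integral[OF int, symmetric]) simp
  show "0 \<le> laplace L t"
    unfolding laplace_def by simp
  have "laplace L t \<le> (\<integral>y. 1 \<partial>L)"
    unfolding laplace_def using bound by (intro integral_mono_AE[OF int]) auto
  then show "laplace L t \<le> 1"
    by (simp add: prob_space)
qed

section \<open>The collective risk model\<close>

text \<open>(N, X_1, ..., X_k) has the joint cdf of the w-mixture, over (a, b), of order2_law a of the
  law of N and k independent copies of order2_law b of the law of X.\<close>
definition joint_cdf_order2_mixture ::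
  "'a measure \<Rightarrow> ('a \<Rightarrow> nat) \<Rightarrow> (nat \<Rightarrow> 'a \<Rightarrow> real) \<Rightarrow> (nat \<Rightarrow> nat \<Rightarrow> real) \<Rightarrow> nat \<Rightarrow> bool" where
  "joint_cdf_order2_mixture M N X w k \<longleftrightarrow> (\<forall>n x. joint_cdf M N X k n x =
     (\<Sum>a\<in>{0, 1}. \<Sum>b\<in>{0, 1}. w a b * order2_cdf a (cdf_N M N n) * (\<Prod>j\<in>{1..k}. order2_cdf b (cdf_X M X (x j)))))"

lemma joint_cdf_order2_mixture_0:
  assumes "w 0 0 + w 0 1 = 1/2" "w 1 0 + w 1 1 = 1/2"
  shows "joint_cdf_order2_mixture M N X w 0"
proof -
  have "(\<Sum>a\<in>{0, 1}. \<Sum>b\<in>{0, 1}. w a b * order2_cdf a u)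
      = (w 0 0 + w 0 1) * order2_cdf 0 u + (w 1 0 + w 1 1) * order2_cdf 1 u" for u
    by (simp add: algebra_simps)
  also have "\<dots> u = u" for u
    using order2_cdf_min_add_max[of u] unfolding assms by simp
  finally have "(\<Sum>a\<in>{0, 1}. \<Sum>b\<in>{0, 1}. w a b * order2_cdf a u) = u" for u .
  then show ?thesis
    by (simp add: joint_cdf_order2_mixture_def joint_cdf_def cdf_N_def)
qed


lemma aleph_FGM_joint_cdf_order2_mixture:
  assumes al: "aleph_FGM M N X p" and k: "1 \<le> k" "\<exists>n\<in>support_N M N. k \<le> n"
    and p: "\<And>i. i \<in> {..<k+1} \<rightarrow>\<^sub>E {0, 1} \<Longrightarrow>
      p k i = (if \<forall>j\<in>{1..k}. i j = i 1 then w (i 0) (i 1) else 0)"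
  shows "joint_cdf_order2_mixture M N X w k"
proof -
  obtain \<theta> where pmf: "\<And>i. (\<forall>j\<le>k. i j \<in> {0, 1}) \<Longrightarrow> fgm_pmf (k+1) \<theta> i = p k i"
    and cdf: "\<And>n x. joint_cdf M N X k n x =
      fgm_copula (k+1) \<theta> (\<lambda>m. if m = 0 then cdf_N M N n else cdf_X M X (x m))"
    using al k unfolding aleph_FGM_def by blast
  have pmf_eq: "fgm_pmf (k+1) \<theta> i = p k i" if "i \<in> {..<k+1} \<rightarrow>\<^sub>E {0, 1}" for i
    using PiE_mem[OF that] by (intro pmf) auto
  have "joint_cdf M N X k n x
      = (\<Sum>a\<in>{0, 1}. \<Sum>b\<in>{0, 1}. w a b * order2_cdf a (cdf_N M N n) * (\<Prod>j\<in>{1..k}. order2_cdf b (cdf_X M X (x j))))"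
    for n x
  proof -
    let ?u = "\<lambda>m. if m = 0 then cdf_N M N n else cdf_X M X (x m)"
    have "joint_cdf M N X k n x
        = (\<Sum>i\<in>{..<k+1} \<rightarrow>\<^sub>E {0, 1}. p k i * (\<Prod>m<k+1. order2_cdf (i m) (?u m)))"
      unfolding cdf fgm_copula_eq_mixture
      by (intro sum.cong refl) (simp only: pmf_eq)
    also have "\<dots> = (\<Sum>a\<in>{0, 1}. \<Sum>b\<in>{0, 1}. w a b * order2_cdf a (?u 0) * (\<Prod>j\<in>{1..k}. order2_cdf b (?u j)))"
      by (rule fgm_mixture_constant_tail[OF k(1) p])
    finally show ?thesis
      by simp
  qed
  then show ?thesis
    by (simp add: joint_cdf_order2_mixture_def)
qed

context
  fixes M :: "'a measure" and N :: "'a \<Rightarrow> nat" and X :: "nat \<Rightarrow> 'a \<Rightarrow> real"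
  assumes crm: "CRM M N X"
begin

interpretation M: prob_space M
  using crm by (simp add: CRM_def)

lemma measurable_N: "N \<in> measurable M (count_space UNIV)"
  using crm by (simp add: CRM_def)

lemma measurable_X: "1 \<le> j \<Longrightarrow> X j \<in> borel_measurable M"
  using crm by (simp add: CRM_def)

lemma X_pos: "1 \<le> j \<Longrightarrow> \<omega> \<in> space M \<Longrightarrow> 0 < X j \<omega>"
  using crm by (simp add: CRM_def)

lemma law_N:
  shows "prob_space (distr M (count_space UNIV) N)"
    and "sets (distr M (count_space UNIV) N) = sets borel"
    and "measure (distr M (count_space UNIV) N) {..n} = cdf_N M N n"
proof -
  note measurable_N[measurable]
  show "prob_space (distr M (count_space UNIV) N)"
    by (simp add: M.prob_space_distr)
  show "sets (distr M (count_space UNIV) N) = sets borel"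
    by (simp add: sets_borel_eq_count_space)
  have "N -` {..n} \<inter> space M = {\<omega> \<in> space M. N \<omega> \<le> n}" by auto
  then show "measure (distr M (count_space UNIV) N) {..n} = cdf_N M N n"
    by (simp add: cdf_N_def measure_distr)
qed

lemma law_X:
  shows "prob_space (distr M borel (X 1))"
    and "sets (distr M borel (X 1)) = sets borel"
    and "measure (distr M borel (X 1)) {..s} = cdf_X M X s"
proof -
  show "prob_space (distr M borel (X 1))"
    using measurable_X by (simp add: M.prob_space_distr)
  show "sets (distr M borel (X 1)) = sets borel"
    by simp
  have "X 1 -` {..s} \<inter> space M = {\<omega> \<in> space M. X 1 \<omega> \<le> s}" by auto
  then show "measure (distr M borel (X 1)) {..s} = cdf_X M X s"
    using measurable_X by (simp add: cdf_X_def measure_distr)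
qed

lemma order2_law_N:
  "prob_space (order2_law a (distr M (count_space UNIV) N))"
  "sets (order2_law a (distr M (count_space UNIV) N)) = sets (count_space UNIV)"
  using prob_space_order2_law[OF law_N(1,2)] by simp_all

lemma order2_law_X:
  "prob_space (order2_law b (distr M borel (X 1)))"
  "sets (order2_law b (distr M borel (X 1))) = sets borel"
  using prob_space_order2_law[OF law_X(1,2)] by simp_all

lemma measure_order2_law_X_atMost:
  "measure (order2_law b (distr M borel (X 1))) {..s} = order2_cdf b (cdf_X M X s)"
  using law_X by (subst measure_order2_law_downset) auto

lemma AE_order2_law_X_nonneg: "AE y in order2_law b (distr M borel (X 1)). 0 \<le> y"
proof -
  interpret L: prob_space "order2_law b (distr M borel (X 1))"
    using law_X by (intro prob_space_order2_law)
  have "{\<omega> \<in> space M. X 1 \<omega> \<le> 0} = {}"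
    using X_pos[of 1] by force
  then have "cdf_X M X 0 = 0"
    unfolding cdf_X_def by (metis measure_empty)
  then have "emeasure (order2_law b (distr M borel (X 1))) {..0} = 0"
    unfolding L.emeasure_eq_measure measure_order2_law_X_atMost by simp
  then have "AE y in order2_law b (distr M borel (X 1)). y \<notin> {..0}"
    by (intro AE_I'[of "{..0}"]) auto
  then show ?thesis
    by eventually_elim auto
qed

lemma laplace_order2_law_X:
  assumes "0 \<le> t"
  shows "ennreal (laplace (order2_law b (distr M borel (X 1))) t)
      = (\<integral>\<^sup>+ y. ennreal (exp (- t * y)) \<partial>order2_law b (distr M borel (X 1)))"
    and "0 \<le> laplace (order2_law b (distr M borel (X 1))) t"
    and "laplace (order2_law b (distr M borel (X 1))) t \<le> 1"
  using ennreal_laplace[OF order2_law_X AE_order2_law_X_nonneg assms]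
    laplace_nonneg[OF order2_law_X AE_order2_law_X_nonneg assms]
    laplace_le_1[OF order2_law_X AE_order2_law_X_nonneg assms] by auto

lemma measure_order2_law_N_singleton:
  "measure (order2_law a (distr M (count_space UNIV) N)) {n}
     = order2_cdf a (cdf_N M N n) - order2_cdf a (measure (distr M (count_space UNIV) N) {..<n})"
  using measure_order2_law_singleton[OF law_N(1,2)] law_N(3) by simp

lemma sets_N_eq_X_le:
  assumes "\<And>j. j \<in> J \<Longrightarrow> 1 \<le> j" "finite J"
  shows "{\<omega> \<in> space M. P (N \<omega>) \<and> (\<forall>j\<in>J. X j \<omega> \<le> x j)} \<in> sets M"
proof -
  note measurable_N[measurable]
  have "{\<omega> \<in> space M. X j \<omega> \<le> x j} \<in> sets M" if "j \<in> J" for j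
    using measurable_X[OF assms(1)[OF that]] by measurable
  then show ?thesis
    using assms(2) by (intro sets.sets_Collect_conj sets.sets_Collect_finite_All) auto
qed

lemma measure_N_eq_X_le:
  assumes "joint_cdf_order2_mixture M N X w k"
  shows "measure M {\<omega> \<in> space M. N \<omega> = n \<and> (\<forall>j\<in>{1..k}. X j \<omega> \<le> x j)}
    = (\<Sum>a\<in>{0, 1}. \<Sum>b\<in>{0, 1}. w a b * measure (order2_law a (distr M (count_space UNIV) N)) {n}
         * (\<Prod>j\<in>{1..k}. measure (order2_law b (distr M borel (X 1))) {..x j}))"
proof -
  let ?E = "\<lambda>n'. {\<omega> \<in> space M. N \<omega> \<le> n' \<and> (\<forall>j\<in>{1..k}. X j \<omega> \<le> x j)}"
  let ?P = "\<lambda>b. \<Prod>j\<in>{1..k}. order2_cdf b (cdf_X M X (x j))"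
  have E: "measure M (?E n') = (\<Sum>a\<in>{0, 1}. \<Sum>b\<in>{0, 1}. w a b * order2_cdf a (cdf_N M N n') * ?P b)" for n'
    using assms by (simp add: joint_cdf_order2_mixture_def joint_cdf_def)
  have "measure M {\<omega> \<in> space M. N \<omega> = n \<and> (\<forall>j\<in>{1..k}. X j \<omega> \<le> x j)}
    = (\<Sum>a\<in>{0, 1}. \<Sum>b\<in>{0, 1}. w a b * measure (order2_law a (distr M (count_space UNIV) N)) {n} * ?P b)"
  proof (cases n)
    case 0
    then show ?thesis
      using E[of 0] by (simp add: measure_order2_law_N_singleton)
  next
    case (Suc m)
    then have "{\<omega> \<in> space M. N \<omega> = n \<and> (\<forall>j\<in>{1..k}. X j \<omega> \<le> x j)} = ?E n - ?E m" by auto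
    moreover have "measure M (?E n - ?E m) = measure M (?E n) - measure M (?E m)"
      using Suc by (intro M.finite_measure_Diff sets_N_eq_X_le) auto
    ultimately show ?thesis
      using E Suc law_N(3)
      by (simp add: measure_order2_law_N_singleton lessThan_Suc_atMost algebra_simps)
  qed
  then show ?thesis
    unfolding measure_order2_law_X_atMost .
qed

lemma measure_N_eq_X_le_null:
  assumes "measure M {\<omega> \<in> space M. N \<omega> = n} = 0"
  shows "measure M {\<omega> \<in> space M. N \<omega> = n \<and> (\<forall>j\<in>{1..k}. X j \<omega> \<le> x j)} = 0"
    and "measure (order2_law a (distr M (count_space UNIV) N)) {n} = 0"
proof -
  interpret DN: prob_space "distr M (count_space UNIV) N"
    by (rule law_N(1))
  note measurable_N[measurable]
  have "{\<omega> \<in> space M. N \<omega> = n} \<in> sets M"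
    by measurable
  then have "measure M {\<omega> \<in> space M. N \<omega> = n \<and> (\<forall>j\<in>{1..k}. X j \<omega> \<le> x j)} \<le> measure M {\<omega> \<in> space M. N \<omega> = n}"
    by (rule M.finite_measure_mono[rotated]) auto
  then show "measure M {\<omega> \<in> space M. N \<omega> = n \<and> (\<forall>j\<in>{1..k}. X j \<omega> \<le> x j)} = 0"
    using assms measure_nonneg[of M "{\<omega> \<in> space M. N \<omega> = n \<and> (\<forall>j\<in>{1..k}. X j \<omega> \<le> x j)}"] by linarith
  have "N -` {n} \<inter> space M = {\<omega> \<in> space M. N \<omega> = n}" by auto
  then have "measure (distr M (count_space UNIV) N) {n} = 0"
    using assms by (simp add: measure_distr)
  moreover have "measure (distr M (count_space UNIV) N) ({..<n} \<union> {n})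
      = measure (distr M (count_space UNIV) N) {..<n} + measure (distr M (count_space UNIV) N) {n}"
    by (intro DN.finite_measure_Union) auto
  moreover have "{..<n} \<union> {n} = {..n}" by auto
  ultimately show "measure (order2_law a (distr M (count_space UNIV) N)) {n} = 0"
    unfolding measure_order2_law_N_singleton law_N(3)[symmetric] by simp
qed

text \<open>Off the support of N both sides vanish, so the copula representation is needed only for
  k up to sup A_N.\<close>
lemma measure_N_eq_X_le_order2_mixture:
  assumes w0: "w 0 0 + w 0 1 = 1/2" "w 1 0 + w 1 1 = 1/2"
    and mix: "\<And>k. 1 \<le> k \<Longrightarrow> (\<exists>m\<in>support_N M N. k \<le> m) \<Longrightarrow> joint_cdf_order2_mixture M N X w k"
  shows "measure M {\<omega> \<in> space M. N \<omega> = n \<and> (\<forall>j\<in>{1..n}. X j \<omega> \<le> x j)}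
    = (\<Sum>a\<in>{0, 1}. \<Sum>b\<in>{0, 1}. w a b * measure (order2_law a (distr M (count_space UNIV) N)) {n}
         * (\<Prod>j\<in>{1..n}. measure (order2_law b (distr M borel (X 1))) {..x j}))"
proof (cases "measure M {\<omega> \<in> space M. N \<omega> = n} = 0")
  case True
  then show ?thesis
    using measure_N_eq_X_le_null[OF True] by simp
next
  case False
  then have "n \<in> support_N M N"
    by (simp add: support_N_def zero_less_measure_iff)
  then have "joint_cdf_order2_mixture M N X w n"
    using joint_cdf_order2_mixture_0[OF w0] mix[of n] by (cases n) auto
  then show ?thesis
    by (rule measure_N_eq_X_le)
qed

lemma nn_integral_N_eq_prod_exp:
  assumes t: "0 < t" and w: "\<And>a b. 0 \<le> w a b"
    and point: "\<And>x. measure M {\<omega> \<in> space M. N \<omega> = n \<and> (\<forall>j\<in>{1..n}. X j \<omega> \<le> x j)}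
      = (\<Sum>a\<in>{0, 1}. \<Sum>b\<in>{0, 1}. w a b * measure (order2_law a (distr M (count_space UNIV) N)) {n}
         * (\<Prod>j\<in>{1..n}. measure (order2_law b (distr M borel (X 1))) {..x j}))"
  shows "(\<integral>\<^sup>+ \<omega>. indicator {\<omega> \<in> space M. N \<omega> = n} \<omega> * (\<Prod>j\<in>{1..n}. ennreal (exp (- t * X j \<omega>))) \<partial>M)
    = (\<Sum>a\<in>{0, 1}. \<Sum>b\<in>{0, 1}. ennreal (w a b * measure (order2_law a (distr M (count_space UNIV) N)) {n})
         * (\<integral>\<^sup>+ y. ennreal (exp (- t * y)) \<partial>order2_law b (distr M borel (X 1))) ^ n)"
proof -
  let ?\<mu> = "\<lambda>a. order2_law a (distr M (count_space UNIV) N)"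
  let ?L = "\<lambda>p. order2_law (snd p) (distr M borel (X 1))"
  let ?c = "\<lambda>p. ennreal (w (fst p) (snd p) * measure (?\<mu> (fst p)) {n})"
  let ?E = "\<lambda>x. {\<omega> \<in> space M. N \<omega> = n \<and> (\<forall>j\<in>{1..n}. X j \<omega> \<le> x j)}"
  note measurable_N[measurable]
  have L: "prob_space (?L p)" "sets (?L p) = sets borel" for p
    using prob_space_order2_law[OF law_X(1,2)] law_X(2) by simp_all
  have emeasure_L: "emeasure (?L p) A = ennreal (measure (?L p) A)" for p A
    using finite_measure.emeasure_eq_measure[OF prob_space.axioms(1)[OF L(1)]] .
  have "(\<integral>\<^sup>+ \<omega>. indicator {\<omega> \<in> space M. N \<omega> = n} \<omega> * (\<Prod>j\<in>{1..n}. indicator {..x j} (X j \<omega>)) \<partial>M)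
      = (\<Sum>p\<in>{0, 1} \<times> {0, 1}. ?c p * (\<Prod>j\<in>{1..n}. emeasure (?L p) {..x j}))" for x
  proof -
    have "(\<integral>\<^sup>+ \<omega>. indicator {\<omega> \<in> space M. N \<omega> = n} \<omega> * (\<Prod>j\<in>{1..n}. indicator {..x j} (X j \<omega>)) \<partial>M)
        = (\<integral>\<^sup>+ \<omega>. indicator (?E x) \<omega> \<partial>M)"
      by (intro nn_integral_cong) (auto simp: indicator_def prod_zero_iff)
    also have "\<dots> = ennreal (measure M (?E x))"
      using sets_N_eq_X_le by (simp add: M.emeasure_eq_measure)
    also have "\<dots> = (\<Sum>p\<in>{0, 1} \<times> {0, 1}. ennreal (w (fst p) (snd p) * measure (?\<mu> (fst p)) {n}
         * (\<Prod>j\<in>{1..n}. measure (?L p) {..x j})))"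
      unfolding point sum.cartesian_product
      using w by (subst sum_ennreal[symmetric]) (auto intro!: mult_nonneg_nonneg prod_nonneg simp: case_prod_beta)
    also have "\<dots> = (\<Sum>p\<in>{0, 1} \<times> {0, 1}. ?c p * (\<Prod>j\<in>{1..n}. emeasure (?L p) {..x j}))"
      using w unfolding emeasure_L by (intro sum.cong refl) (simp add: ennreal_mult prod_nonneg prod_ennreal)
    finally show ?thesis .
  qed
  then have "(\<integral>\<^sup>+ \<omega>. indicator {\<omega> \<in> space M. N \<omega> = n} \<omega> * (\<Prod>j\<in>{1..n}. ennreal (exp (- t * X j \<omega>))) \<partial>M)
      = (\<Sum>p\<in>{0, 1} \<times> {0, 1}. ?c p * (\<integral>\<^sup>+ y. ennreal (exp (- t * y)) \<partial>?L p) ^ n)"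
    using L measurable_X t
    by (intro nn_integral_prod_exp_from_joint_cdf M.sigma_finite_measure) auto
  then show ?thesis
    by (simp add: sum.cartesian_product)
qed

lemma borel_measurable_aggregate: "aggregate N X \<in> borel_measurable M"
  unfolding aggregate_def
proof (rule measurable_compose_countable'[where f="\<lambda>i \<omega>. \<Sum>j\<in>{1..i}. X j \<omega>" and I=UNIV])
  show "(\<lambda>\<omega>. \<Sum>j\<in>{1..i}. X j \<omega>) \<in> borel_measurable M" for i
    using measurable_X by (intro borel_measurable_sum) auto
qed (auto simp: measurable_N)

lemma ennreal_laplace_aggregate_eq_suminf:
  assumes "0 \<le> t"
  shows "ennreal (\<integral>\<omega>. exp (- t * aggregate N X \<omega>) \<partial>M)
    = (\<Sum>n. \<integral>\<^sup>+ \<omega>. indicator {\<omega> \<in> space M. N \<omega> = n} \<omega> * (\<Prod>j\<in>{1..n}. ennreal (exp (- t * X j \<omega>))) \<partial>M)"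
proof -
  note measurable_N[measurable]
  have "ennreal (\<integral>\<omega>. exp (- t * aggregate N X \<omega>) \<partial>M) = (\<integral>\<^sup>+ \<omega>. ennreal (exp (- t * aggregate N X \<omega>)) \<partial>M)"
  proof (intro nn_integral_eq_integral[symmetric] M.integrable_const_bound[where B=1])
    have "0 \<le> aggregate N X \<omega>" if "\<omega> \<in> space M" for \<omega>
      unfolding aggregate_def using X_pos[OF _ that] by (intro sum_nonneg) (simp add: less_imp_le)
    then show "AE \<omega> in M. norm (exp (- t * aggregate N X \<omega>)) \<le> 1"
      using assms by (intro AE_I2) simp
  qed (use borel_measurable_aggregate in auto)
  also have "\<dots> = (\<integral>\<^sup>+ \<omega>. (\<Sum>n. indicator {\<omega> \<in> space M. N \<omega> = n} \<omega> * (\<Prod>j\<in>{1..n}. ennreal (exp (- t * X j \<omega>)))) \<partial>M)"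
  proof (intro nn_integral_cong)
    fix \<omega> assume "\<omega> \<in> space M"
    then have "(\<Sum>n. indicator {\<omega> \<in> space M. N \<omega> = n} \<omega> * (\<Prod>j\<in>{1..n}. ennreal (exp (- t * X j \<omega>))))
        = (\<Prod>j\<in>{1..N \<omega>}. ennreal (exp (- t * X j \<omega>)))"
      by (subst suminf_finite[of "{N \<omega>}"]) auto
    then show "ennreal (exp (- t * aggregate N X \<omega>))
        = (\<Sum>n. indicator {\<omega> \<in> space M. N \<omega> = n} \<omega> * (\<Prod>j\<in>{1..n}. ennreal (exp (- t * X j \<omega>))))"
      by (simp add: aggregate_def exp_sum sum_distrib_left prod_ennreal)
  qed
  also have "\<dots> = (\<Sum>n. \<integral>\<^sup>+ \<omega>. indicator {\<omega> \<in> space M. N \<omega> = n} \<omega> * (\<Prod>j\<in>{1..n}. ennreal (exp (- t * X j \<omega>))) \<partial>M)"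
  proof (intro nn_integral_suminf)
    fix n
    have "(\<lambda>\<omega>. \<Prod>j\<in>{1..n}. ennreal (exp (- t * X j \<omega>))) \<in> borel_measurable M"
      using measurable_X by (intro borel_measurable_prod_ennreal) auto
    then show "(\<lambda>\<omega>. indicator {\<omega> \<in> space M. N \<omega> = n} \<omega> * (\<Prod>j\<in>{1..n}. ennreal (exp (- t * X j \<omega>)))) \<in> borel_measurable M"
      by measurable
  qed
  finally show ?thesis .
qed

lemma laplace_aggregate_eq_order2_mixture:
  assumes t: "0 \<le> t" and w: "\<And>a b. 0 \<le> w a b" and w0: "w 0 0 + w 0 1 = 1/2" "w 1 0 + w 1 1 = 1/2"
    and mix: "\<And>k. 1 \<le> k \<Longrightarrow> (\<exists>m\<in>support_N M N. k \<le> m) \<Longrightarrow> joint_cdf_order2_mixture M N X w k"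
  shows "(\<integral>\<omega>. exp (- t * aggregate N X \<omega>) \<partial>M)
    = (\<Sum>a\<in>{0, 1}. \<Sum>b\<in>{0, 1}. w a b * pgf (order2_law a (distr M (count_space UNIV) N))
         (laplace (order2_law b (distr M borel (X 1))) t))"
proof -
  let ?\<mu> = "\<lambda>a. order2_law a (distr M (count_space UNIV) N)"
  let ?lap = "\<lambda>b. laplace (order2_law b (distr M borel (X 1))) t"
  have pgf_nonneg: "0 \<le> pgf (?\<mu> a) (?lap b)" for a b
    unfolding pgf_def using laplace_order2_law_X(2)[OF t] by simp
  show ?thesis
  proof (cases "t = 0")
    case True
    have "?lap b = 1" for b
      using True laplace_0[OF order2_law_X(1)] by simp
    moreover have "pgf (?\<mu> a) 1 = 1" for a
      by (rule pgf_1[OF order2_law_N(1)])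
    ultimately show ?thesis
      using True w0 by (simp add: M.prob_space)
  next
    case False
    then have "0 < t" using t by simp
    have "ennreal (\<integral>\<omega>. exp (- t * aggregate N X \<omega>) \<partial>M)
        = (\<Sum>n. \<Sum>a\<in>{0, 1}. \<Sum>b\<in>{0, 1}. ennreal (w a b) * (ennreal (?lap b) ^ n * emeasure (?\<mu> a) {n}))"
    proof (unfold ennreal_laplace_aggregate_eq_suminf[OF t], intro suminf_cong)
      fix n
      have point: "measure M {\<omega> \<in> space M. N \<omega> = n \<and> (\<forall>j\<in>{1..n}. X j \<omega> \<le> x j)}
        = (\<Sum>a\<in>{0, 1}. \<Sum>b\<in>{0, 1}. w a b * measure (?\<mu> a) {n}
           * (\<Prod>j\<in>{1..n}. measure (order2_law b (distr M borel (X 1))) {..x j}))" for x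
        by (rule measure_N_eq_X_le_order2_mixture[OF w0]) (fact mix)
      have emeasure_\<mu>: "emeasure (?\<mu> a) {n} = ennreal (measure (?\<mu> a) {n})" for a
        using finite_measure.emeasure_eq_measure[OF prob_space.axioms(1)[OF order2_law_N(1)]] .
      show "(\<integral>\<^sup>+ \<omega>. indicator {\<omega> \<in> space M. N \<omega> = n} \<omega> * (\<Prod>j\<in>{1..n}. ennreal (exp (- t * X j \<omega>))) \<partial>M)
        = (\<Sum>a\<in>{0, 1}. \<Sum>b\<in>{0, 1}. ennreal (w a b) * (ennreal (?lap b) ^ n * emeasure (?\<mu> a) {n}))"
        unfolding nn_integral_N_eq_prod_exp[OF \<open>0 < t\<close> w point] laplace_order2_law_X(1)[OF t, symmetric]
          emeasure_\<mu>
        using w by (simp add: ennreal_mult mult_ac)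
    qed
    also have "\<dots> = (\<Sum>a\<in>{0, 1}. \<Sum>b\<in>{0, 1}. ennreal (w a b) * (\<Sum>n. ennreal (?lap b) ^ n * emeasure (?\<mu> a) {n}))"
      by (simp only: suminf_sum[OF summableI] ennreal_suminf_cmult)
    also have "\<dots> = (\<Sum>a\<in>{0, 1}. \<Sum>b\<in>{0, 1}. ennreal (w a b) * ennreal (pgf (?\<mu> a) (?lap b)))"
      unfolding ennreal_pgf_eq_suminf[OF order2_law_N laplace_order2_law_X(2,3)[OF t]] ..
    also have "\<dots> = ennreal (\<Sum>a\<in>{0, 1}. \<Sum>b\<in>{0, 1}. w a b * pgf (?\<mu> a) (?lap b))"
      using w pgf_nonneg by (simp add: ennreal_mult ennreal_plus add_nonneg_nonneg)
    finally show ?thesis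
      using w pgf_nonneg by (subst (asm) ennreal_inj) (auto intro!: sum_nonneg)
  qed
qed

end

lemma laplace_aggregate_aleph_FGM:
  assumes al: "aleph_FGM M N X p" and t: "0 \<le> t"
    and w: "\<And>a b. 0 \<le> w a b" "w 0 0 + w 0 1 = 1/2" "w 1 0 + w 1 1 = 1/2"
    and p: "\<And>k i. 1 \<le> k \<Longrightarrow> i \<in> {..<k+1} \<rightarrow>\<^sub>E {0, 1} \<Longrightarrow>
      p k i = (if \<forall>j\<in>{1..k}. i j = i 1 then w (i 0) (i 1) else 0)"
  shows "(\<integral>\<omega>. exp (- t * aggregate N X \<omega>) \<partial>M)
    = (\<Sum>a\<in>{0, 1}. \<Sum>b\<in>{0, 1}. w a b * pgf (order2_law a (distr M (count_space UNIV) N))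
         (laplace (order2_law b (distr M borel (X 1))) t))"
proof (rule laplace_aggregate_eq_order2_mixture[OF _ t w])
  show "CRM M N X"
    using al by (simp add: aleph_FGM_def)
  show "joint_cdf_order2_mixture M N X w k" if "1 \<le> k" "\<exists>m\<in>support_N M N. k \<le> m" for k
    using that by (intro aleph_FGM_joint_cdf_order2_mixture[OF al] p)
qed

lemma p_tri_tri_constant_tail:
  assumes "1 \<le> k"
  shows "p_tri_tri k i = (if \<forall>j\<in>{1..k}. i j = i 1 then (if i 0 = i 1 then 1/2 else 0) else 0)"
proof -
  have "(\<forall>j\<le>k. i j = i 0) \<longleftrightarrow> (\<forall>j\<in>{1..k}. i j = i 1) \<and> i 0 = i 1"
    using assms by (metis atLeastAtMost_iff less_one linorder_le_less_linear)
  then show ?thesis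
    unfolding p_tri_tri_def by (simp only: if_if_eq_conj)
qed

lemma p_nabla_tri_constant_tail:
  assumes "1 \<le> k" "i 0 \<in> {0, 1}" "i 1 \<in> {0, 1}"
  shows "p_nabla_tri k i = (if \<forall>j\<in>{1..k}. i j = i 1 then (if i 0 \<noteq> i 1 then 1/2 else 0) else 0)"
proof -
  have "(\<forall>j\<in>{1..k}. i j = 1 - i 0) \<longleftrightarrow> (\<forall>j\<in>{1..k}. i j = i 1) \<and> i 0 \<noteq> i 1"
    using assms by (smt (verit, ccfv_threshold) all_not_in_conv atLeastAtMost_iff
      diff_is_0_eq' insert_iff le_numeral_extra(2,4) minus_nat.diff_0)
  then show ?thesis
    unfolding p_nabla_tri_def by (simp only: if_if_eq_conj)
qed

lemma laplace_aggregate_tri_tri: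
  assumes "aleph_FGM M N X p_tri_tri" "0 \<le> t"
  shows "(\<integral>\<omega>. exp (- t * aggregate N X \<omega>) \<partial>M)
    = 1/2 * pgf (law_min2 (distr M (count_space UNIV) N)) (laplace (law_min2 (distr M borel (X 1))) t)
    + 1/2 * pgf (law_max2 (distr M (count_space UNIV) N)) (laplace (law_max2 (distr M borel (X 1))) t)"
proof -
  have "(\<integral>\<omega>. exp (- t * aggregate N X \<omega>) \<partial>M) = (\<Sum>a\<in>{0, 1}. \<Sum>b\<in>{0, 1}.
      (if a = b then 1/2 else 0) * pgf (order2_law a (distr M (count_space UNIV) N))
        (laplace (order2_law b (distr M borel (X 1))) t))"
  proof (rule laplace_aggregate_aleph_FGM[OF assms])
    show "p_tri_tri k i = (if \<forall>j\<in>{1..k}. i j = i 1 then if i 0 = i 1 then 1/2 else 0 else 0)"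
      if "1 \<le> k" for k i
      using that by (rule p_tri_tri_constant_tail)
  qed simp_all
  then show ?thesis
    by (simp add: order2_law_def)
qed

lemma laplace_aggregate_nabla_tri:
  assumes "aleph_FGM M N X p_nabla_tri" "0 \<le> t"
  shows "(\<integral>\<omega>. exp (- t * aggregate N X \<omega>) \<partial>M)
    = 1/2 * pgf (law_min2 (distr M (count_space UNIV) N)) (laplace (law_max2 (distr M borel (X 1))) t)
    + 1/2 * pgf (law_max2 (distr M (count_space UNIV) N)) (laplace (law_min2 (distr M borel (X 1))) t)"
proof -
  have "(\<integral>\<omega>. exp (- t * aggregate N X \<omega>) \<partial>M) = (\<Sum>a\<in>{0, 1}. \<Sum>b\<in>{0, 1}.
      (if a \<noteq> b then 1/2 else 0) * pgf (order2_law a (distr M (count_space UNIV) N))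
        (laplace (order2_law b (distr M borel (X 1))) t))"
  proof (rule laplace_aggregate_aleph_FGM[OF assms])
    show "p_nabla_tri k i = (if \<forall>j\<in>{1..k}. i j = i 1 then if i 0 \<noteq> i 1 then 1/2 else 0 else 0)"
      if "1 \<le> k" "i \<in> {..<k+1} \<rightarrow>\<^sub>E {0, 1}" for k i
      using that(1) PiE_mem[OF that(2), of 0] PiE_mem[OF that(2), of 1]
      by (intro p_nabla_tri_constant_tail) auto
  qed simp_all
  then show ?thesis
    by (simp add: order2_law_def)
qed

lemma laplace_aggregate_perp_tri:
  assumes al: "aleph_FGM M N X p_perp_tri" and t: "0 \<le> t"
  shows "(\<integral>\<omega>. exp (- t * aggregate N X \<omega>) \<partial>M)
    = 1/2 * pgf (distr M (count_space UNIV) N) (laplace (law_min2 (distr M borel (X 1))) t)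
    + 1/2 * pgf (distr M (count_space UNIV) N) (laplace (law_max2 (distr M borel (X 1))) t)"
proof -
  have crm: "CRM M N X"
    using al by (simp add: aleph_FGM_def)
  have sum: "(\<integral>\<omega>. exp (- t * aggregate N X \<omega>) \<partial>M) = (\<Sum>a\<in>{0, 1}. \<Sum>b\<in>{0, 1}.
      1/4 * pgf (order2_law a (distr M (count_space UNIV) N)) (laplace (order2_law b (distr M borel (X 1))) t))"
  proof (rule laplace_aggregate_aleph_FGM[OF al t])
    show "p_perp_tri k i = (if \<forall>j\<in>{1..k}. i j = i 1 then 1/4 else 0)" for k i
      by (simp only: p_perp_tri_def)
  qed simp_all
  have mean: "pgf (distr M (count_space UNIV) N) (laplace (order2_law b (distr M borel (X 1))) t)
      = 1/2 * pgf (law_min2 (distr M (count_space UNIV) N)) (laplace (order2_law b (distr M borel (X 1))) t)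
      + 1/2 * pgf (law_max2 (distr M (count_space UNIV) N)) (laplace (order2_law b (distr M borel (X 1))) t)"
    for b
    using law_N(1,2)[OF crm] laplace_order2_law_X(2,3)[OF crm t]
    by (intro pgf_eq_mean_pgf_min_max) (simp_all add: sets_borel_eq_count_space)
  show ?thesis
    using sum mean[of 0] mean[of 1] by (simp add: order2_law_def field_simps)
qed

theorem mainTheorem13:
  fixes M :: "'a measure" and N :: "'a \<Rightarrow> nat" and X :: "nat \<Rightarrow> 'a \<Rightarrow> real"
  defines "DN \<equiv> distr M (count_space UNIV) N"
      and "DX \<equiv> distr M borel (X 1)"
  shows
   "(aleph_FGM_star M N X p_tri_tri \<longrightarrow> (\<forall>t\<ge>0.
       (\<integral>\<omega>. exp (- t * aggregate N X \<omega>) \<partial>M) =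
         1/2 * pgf (law_min2 DN) (laplace (law_min2 DX) t)
       + 1/2 * pgf (law_max2 DN) (laplace (law_max2 DX) t)))
  \<and> (aleph_FGM_star M N X p_nabla_tri \<longrightarrow> (\<forall>t\<ge>0.
       (\<integral>\<omega>. exp (- t * aggregate N X \<omega>) \<partial>M) =
         1/2 * pgf (law_min2 DN) (laplace (law_max2 DX) t)
       + 1/2 * pgf (law_max2 DN) (laplace (law_min2 DX) t)))
  \<and> (aleph_FGM_star M N X p_perp_tri \<longrightarrow> (\<forall>t\<ge>0.
       (\<integral>\<omega>. exp (- t * aggregate N X \<omega>) \<partial>M) =
         1/2 * pgf DN (laplace (law_min2 DX) t)
       + 1/2 * pgf DN (laplace (law_max2 DX) t)))"
  unfolding DN_def DX_def aleph_FGM_star_def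
  using laplace_aggregate_tri_tri laplace_aggregate_nabla_tri laplace_aggregate_perp_tri
  by blast

end
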